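(* Let $(R,\mathfrak m)$ be a noetherian local ring and $\nu$ a valuation centered on $R$. Then there exists a local blowing up $R\to R^{(1)}$ with respect to $\nu$ such that $\mathrm{Nil}(R^{(1)})$ is the only associated prime ideal of $R^{(1)}$.
   Context: All rings are commutative noetherian with $1$; $\mathrm{Nil}(A)$ denotes the nilradical of $A$. A valuation on a ring $R$ is a map $\nu:R\to\Gamma\cup\{\infty\}$ ($\Gamma$ an ordered abelian group) with $\nu(ab)=\nu(a)+\nu(b)$, $\nu(a+b)\ge\min\{\nu(a),\nu(b)\}$, $\nu(1)=0$, $\nu(0)=\infty$, whose support $\mathrm{supp}(\nu)=\{a:\nu(a)=\infty\}$ is a minimal prime ideal; it extends to localizations at multiplicative sets disjoint from the support via $\nu(a/s)=\nu(a)-\nu(s)$ and restricts to subrings, implicitly. $\nu$ has a center on $R$ if $\nu\ge0$ on $R$; its center is $\mathfrak C_\nu(R)=\{a:\nu(a)>0\}$. $\nu$ is centered on $(R,\mathfrak m)$ if $\nu\ge0$ on $R$ and $\nu>0$ on $\mathfrak m$. Local blowing up: for $b\in R\setminus\mathrm{supp}(\nu)$ let $J(b)=\bigcup_{i\ge1}\mathrm{ann}_R(b^i)$, so $R/J(b)\subseteq R_b$. Given $a_1,\ldots,a_r\in R$ with $\nu(a_i)\ge\nu(b)$, let $R'=(R/J(b))[a_1/b,\ldots,a_r/b]\subseteq R_b$ and $R^{(1)}=R'_{\mathfrak C_\nu(R')}$; the canonical map $R\to R^{(1)}$ is the local blowing up of $R$ with respect to $\nu$ along $(b,a_1,\ldots,a_r)$.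 *)

theory Defs
  imports "HOL-Algebra.Algebra"
begin

text \<open>Values in \<open>\<Gamma> \<union> {\<infinity>}\<close> are encoded as \<open>'g option\<close>, with \<open>None\<close> playing the role of \<open>\<infinity>\<close>.\<close>

fun vle :: "'g::linordered_ab_group_add option \<Rightarrow> 'g option \<Rightarrow> bool" where
  "vle _ None = True"
| "vle None (Some _) = False"
| "vle (Some a) (Some b) = (a \<le> b)"

definition vlt :: "'g::linordered_ab_group_add option \<Rightarrow> 'g option \<Rightarrow> bool" where
  "vlt x y = (vle x y \<and> x \<noteq> y)"

fun vplus :: "'g::linordered_ab_group_add option \<Rightarrow> 'g option \<Rightarrow> 'g option" where
  "vplus (Some a) (Some b) = Some (a + b)"
| "vplus _ _ = None"

text \<open>\<open>\<nu>(a) - \<nu>(s)\<close>, used only for \<open>\<nu>(s) \<noteq> \<infinity>\<close>.\<close>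
fun vminus :: "'g::linordered_ab_group_add option \<Rightarrow> 'g option \<Rightarrow> 'g option" where
  "vminus (Some a) (Some b) = Some (a - b)"
| "vminus None _ = None"
| "vminus (Some a) None = None"

definition minimal_prime :: "'a set \<Rightarrow> ('a, 'b) ring_scheme \<Rightarrow> bool" where
  "minimal_prime P R \<longleftrightarrow> primeideal P R \<and> (\<forall>Q. primeideal Q R \<and> Q \<subseteq> P \<longrightarrow> Q = P)"

definition vsupp :: "('a, 'b) ring_scheme \<Rightarrow> ('a \<Rightarrow> 'g option) \<Rightarrow> 'a set" where
  "vsupp R \<nu> = {a \<in> carrier R. \<nu> a = None}"

definition valuation :: "('a, 'b) ring_scheme \<Rightarrow> ('a \<Rightarrow> 'g::linordered_ab_group_add option) \<Rightarrow> bool" where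
  "valuation R \<nu> \<longleftrightarrow> cring R
     \<and> (\<forall>a\<in>carrier R. \<forall>b\<in>carrier R. \<nu> (a \<otimes>\<^bsub>R\<^esub> b) = vplus (\<nu> a) (\<nu> b))
     \<and> (\<forall>a\<in>carrier R. \<forall>b\<in>carrier R. vle (\<nu> a) (\<nu> (a \<oplus>\<^bsub>R\<^esub> b)) \<or> vle (\<nu> b) (\<nu> (a \<oplus>\<^bsub>R\<^esub> b)))
     \<and> \<nu> \<one>\<^bsub>R\<^esub> = Some 0 \<and> \<nu> \<zero>\<^bsub>R\<^esub> = None
     \<and> minimal_prime (vsupp R \<nu>) R"

definition has_center :: "('a, 'b) ring_scheme \<Rightarrow> ('a \<Rightarrow> 'g::linordered_ab_group_add option) \<Rightarrow> bool" where
  "has_center R \<nu> \<longleftrightarrow> (\<forall>a\<in>carrier R. vle (Some 0) (\<nu> a))"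

definition vcenter :: "('a, 'b) ring_scheme \<Rightarrow> ('a \<Rightarrow> 'g::linordered_ab_group_add option) \<Rightarrow> 'a set" where
  "vcenter R \<nu> = {a \<in> carrier R. vlt (Some 0) (\<nu> a)}"

definition centered_on :: "('a, 'b) ring_scheme \<Rightarrow> 'a set \<Rightarrow> ('a \<Rightarrow> 'g::linordered_ab_group_add option) \<Rightarrow> bool" where
  "centered_on R m \<nu> \<longleftrightarrow> has_center R \<nu> \<and> (\<forall>a\<in>m. vlt (Some 0) (\<nu> a))"

definition local_ring :: "('a, 'b) ring_scheme \<Rightarrow> 'a set \<Rightarrow> bool" where
  "local_ring R m \<longleftrightarrow> cring R \<and> maximalideal m R \<and> (\<forall>I. maximalideal I R \<longrightarrow> I = m)"

definition nilradical :: "('a, 'b) ring_scheme \<Rightarrow> 'a set" where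
  "nilradical R = {x \<in> carrier R. \<exists>n::nat. x [^]\<^bsub>R\<^esub> n = \<zero>\<^bsub>R\<^esub>}"

definition ann_elem :: "('a, 'b) ring_scheme \<Rightarrow> 'a \<Rightarrow> 'a set" where
  "ann_elem R x = {y \<in> carrier R. y \<otimes>\<^bsub>R\<^esub> x = \<zero>\<^bsub>R\<^esub>}"

definition associated_primes :: "('a, 'b) ring_scheme \<Rightarrow> 'a set set" where
  "associated_primes R = {P. primeideal P R \<and> (\<exists>x\<in>carrier R. P = ann_elem R x)}"

definition loc_class :: "('a, 'b) ring_scheme \<Rightarrow> 'a set \<Rightarrow> 'a \<times> 'a \<Rightarrow> ('a \<times> 'a) set" where
  "loc_class R S p = {(b, t). b \<in> carrier R \<and> t \<in> S \<and>
      (\<exists>u\<in>S. u \<otimes>\<^bsub>R\<^esub> ((t \<otimes>\<^bsub>R\<^esub> fst p) \<ominus>\<^bsub>R\<^esub> (snd p \<otimes>\<^bsub>R\<^esub> b)) = \<zero>\<^bsub>R\<^esub>)}"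

definition localization :: "('a, 'b) ring_scheme \<Rightarrow> 'a set \<Rightarrow> ('a \<times> 'a) set ring" where
  "localization R S =
    \<lparr> carrier = {loc_class R S (a, s) | a s. a \<in> carrier R \<and> s \<in> S},
      monoid.mult = (\<lambda>x y. \<Union>{loc_class R S (a \<otimes>\<^bsub>R\<^esub> b, s \<otimes>\<^bsub>R\<^esub> t) | a s b t. (a, s) \<in> x \<and> (b, t) \<in> y}),
      one = loc_class R S (\<one>\<^bsub>R\<^esub>, \<one>\<^bsub>R\<^esub>),
      ring.zero = loc_class R S (\<zero>\<^bsub>R\<^esub>, \<one>\<^bsub>R\<^esub>),
      ring.add = (\<lambda>x y. \<Union>{loc_class R S ((t \<otimes>\<^bsub>R\<^esub> a) \<oplus>\<^bsub>R\<^esub> (s \<otimes>\<^bsub>R\<^esub> b), s \<otimes>\<^bsub>R\<^esub> t) | a s b t. (a, s) \<in> x \<and> (b, t) \<in> y}) \<rparr>"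

definition loc_val :: "('a \<Rightarrow> 'g::linordered_ab_group_add option) \<Rightarrow> ('a \<times> 'a) set \<Rightarrow> 'g option" where
  "loc_val \<nu> x = (SOME v. \<exists>(a, s)\<in>x. v = vminus (\<nu> a) (\<nu> s))"

definition powers :: "('a, 'b) ring_scheme \<Rightarrow> 'a \<Rightarrow> 'a set" where
  "powers R b = {b [^]\<^bsub>R\<^esub> (n::nat) | n. True}"

text \<open>\<open>R_b\<close>; the image of \<open>R\<close> in it is \<open>R/J(b)\<close>.\<close>
definition Rb :: "('a, 'b) ring_scheme \<Rightarrow> 'a \<Rightarrow> ('a \<times> 'a) set ring" where
  "Rb R b = localization R (powers R b)"

text \<open>\<open>R' = (R/J(b))[a_1/b, \<dots>, a_r/b] \<subseteq> R_b\<close>.\<close>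
definition blowup_chart :: "('a, 'b) ring_scheme \<Rightarrow> 'a \<Rightarrow> 'a list \<Rightarrow> ('a \<times> 'a) set ring" where
  "blowup_chart R b as =
     (Rb R b) \<lparr> carrier := generate_ring (Rb R b)
        ({loc_class R (powers R b) (r, \<one>\<^bsub>R\<^esub>) | r. r \<in> carrier R}
         \<union> {loc_class R (powers R b) (a, b) | a. a \<in> set as}) \<rparr>"

text \<open>\<open>R^{(1)} = R'_{\<CC>_\<nu>(R')}\<close>.\<close>
definition local_blowup :: "('a, 'b) ring_scheme \<Rightarrow> ('a \<Rightarrow> 'g::linordered_ab_group_add option) \<Rightarrow> 'a \<Rightarrow> 'a list
     \<Rightarrow> (('a \<times> 'a) set \<times> ('a \<times> 'a) set) set ring" where
  "local_blowup R \<nu> b as =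
     (let R' = blowup_chart R b as
      in localization R' (carrier R' - vcenter R' (loc_val \<nu>)))"

definition blowup_data :: "('a, 'b) ring_scheme \<Rightarrow> ('a \<Rightarrow> 'g::linordered_ab_group_add option) \<Rightarrow> 'a \<Rightarrow> 'a list \<Rightarrow> bool" where
  "blowup_data R \<nu> b as \<longleftrightarrow> b \<in> carrier R \<and> b \<notin> vsupp R \<nu>
     \<and> (\<forall>a\<in>set as. a \<in> carrier R \<and> vle (\<nu> b) (\<nu> a))"

end

theory Submission
  imports Defs
begin

(* The support P of \<nu> is a minimal prime of R; let K = ker(R \<rightarrow> R_P). As K is finitely
   generated, one b \<notin> P annihilates K, and then J(b) = K: the chart of the blowing up along
   (b) alone is R/K. In its localization R^(1) a fraction (a/s)/w vanishes iff a \<in> K, and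
   it is nilpotent iff a \<in> P, because by minimality of P every element of P has a power in K.
   A colon ideal (K : z) maximal among those with z \<notin> K equals P, so the nilradical of R^(1)
   is the annihilator of z/1 and is prime; and the annihilator of any nonzero (c/t)/v lies in
   the nilradical, since c \<notin> K and a c \<in> K force a \<in> P. Hence the nilradical is the only
   associated prime. *)

section \<open>Localization at a multiplicative set\<close>

locale mult_closed_set = cring R for R (structure) +
  fixes S
  assumes S_subset: "S \<subseteq> carrier R" and one_in_S: "\<one> \<in> S"
    and S_mult: "\<lbrakk>s \<in> S; t \<in> S\<rbrakk> \<Longrightarrow> s \<otimes> t \<in> S"
begin

abbreviation "cls a s \<equiv> loc_class R S (a, s)"
abbreviation "L \<equiv> localization R S"

lemma S_carrier: "s \<in> S \<Longrightarrow> s \<in> carrier R"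
  using S_subset by auto

lemma S_pow: "s \<in> S \<Longrightarrow> s [^] (n::nat) \<in> S"
  by (induct n) (auto simp: one_in_S S_mult)

lemma mem_cls:
  assumes "a \<in> carrier R" "s \<in> S"
  shows "(b, t) \<in> cls a s \<longleftrightarrow> b \<in> carrier R \<and> t \<in> S \<and> (\<exists>u\<in>S. u \<otimes> (t \<otimes> a) = u \<otimes> (s \<otimes> b))"
proof -
  have "u \<otimes> ((t \<otimes> a) \<ominus> (s \<otimes> b)) = \<zero> \<longleftrightarrow> u \<otimes> (t \<otimes> a) = u \<otimes> (s \<otimes> b)"
    if "u \<in> S" "b \<in> carrier R" "t \<in> S" for u b t
  proof -
    have "u \<otimes> ((t \<otimes> a) \<ominus> (s \<otimes> b)) = u \<otimes> (t \<otimes> a) \<ominus> u \<otimes> (s \<otimes> b)"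
      using that assms S_carrier[of u] S_carrier[of t] S_carrier[of s] by algebra
    then show ?thesis
      using that assms by (simp add: S_carrier)
  qed
  then show ?thesis
    using assms unfolding loc_class_def by auto
qed

lemma cls_refl: "a \<in> carrier R \<Longrightarrow> s \<in> S \<Longrightarrow> (a, s) \<in> cls a s"
  by (subst mem_cls) (auto simp: S_carrier m_comm intro: one_in_S)

lemma cls_sym:
  assumes "a \<in> carrier R" "s \<in> S" "(b, t) \<in> cls a s"
  shows "(a, s) \<in> cls b t"
  using assms by (auto simp: mem_cls) (metis)

lemma cls_trans:
  assumes a: "a \<in> carrier R" "s \<in> S" and bt: "(b, t) \<in> cls a s" and cr: "(c, r) \<in> cls b t"
  shows "(c, r) \<in> cls a s"
proof -
  from bt a obtain u where b: "b \<in> carrier R" "t \<in> S" "u \<in> S"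
    and e1: "u \<otimes> (t \<otimes> a) = u \<otimes> (s \<otimes> b)"
    by (auto simp: mem_cls)
  from cr b obtain v where c: "c \<in> carrier R" "r \<in> S" "v \<in> S"
    and e2: "v \<otimes> (r \<otimes> b) = v \<otimes> (t \<otimes> c)"
    by (auto simp: mem_cls)
  have C: "u \<in> carrier R" "v \<in> carrier R" "t \<in> carrier R" "r \<in> carrier R" "s \<in> carrier R"
    using a b c by (auto simp: S_carrier)
  have "(u \<otimes> v \<otimes> t) \<otimes> (r \<otimes> a) = (v \<otimes> r) \<otimes> (u \<otimes> (t \<otimes> a))" using C a by algebra
  also have "\<dots> = (v \<otimes> r) \<otimes> (u \<otimes> (s \<otimes> b))" using e1 by simp
  also have "\<dots> = (u \<otimes> s) \<otimes> (v \<otimes> (r \<otimes> b))" using C b by algebra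
  also have "\<dots> = (u \<otimes> s) \<otimes> (v \<otimes> (t \<otimes> c))" using e2 by simp
  also have "\<dots> = (u \<otimes> v \<otimes> t) \<otimes> (s \<otimes> c)" using C c by algebra
  finally show ?thesis
    using a b c by (subst mem_cls) (auto intro!: bexI[of _ "u \<otimes> v \<otimes> t"] S_mult)
qed

lemma cls_eqI:
  assumes "a \<in> carrier R" "s \<in> S" "(b, t) \<in> cls a s"
  shows "cls b t = cls a s"
proof -
  have bt: "b \<in> carrier R" "t \<in> S"
    using assms by (auto simp: mem_cls)
  show ?thesis
  proof (rule subset_antisym; rule subsetI)
    fix p assume "p \<in> cls b t"
    then show "p \<in> cls a s" using cls_trans[OF assms] by (cases p) auto
  next
    fix p assume "p \<in> cls a s"
    then show "p \<in> cls b t" using cls_trans[OF bt cls_sym[OF assms]] by (cases p) auto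
  qed
qed

lemma cls_eq_iff:
  assumes "a \<in> carrier R" "s \<in> S" "b \<in> carrier R" "t \<in> S"
  shows "cls b t = cls a s \<longleftrightarrow> (\<exists>u\<in>S. u \<otimes> (t \<otimes> a) = u \<otimes> (s \<otimes> b))"
  using assms cls_eqI[OF assms(1,2)] cls_refl[OF assms(3,4)] by (metis mem_cls)

lemma cls_cong: "a = a' \<Longrightarrow> s = s' \<Longrightarrow> cls a s = cls a' s'"
  by simp

lemma cls_scale:
  assumes "a \<in> carrier R" "s \<in> S" "r \<in> S"
  shows "cls (r \<otimes> a) (r \<otimes> s) = cls a s"
  using assms S_carrier
  by (subst cls_eq_iff) (auto intro!: bexI[of _ "\<one>"] one_in_S S_mult simp: m_lcomm m_assoc)

lemma cls_zero: "t \<in> S \<Longrightarrow> cls \<zero> t = cls \<zero> \<one>"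
  using S_carrier by (subst cls_eq_iff) (auto intro!: bexI[of _ "\<one>"] one_in_S)

lemma mult_compat:
  assumes a: "a \<in> carrier R" "s \<in> S" "b \<in> carrier R" "t \<in> S"
    and p: "(a', s') \<in> cls a s" and q: "(b', t') \<in> cls b t"
  shows "(a' \<otimes> b', s' \<otimes> t') \<in> cls (a \<otimes> b) (s \<otimes> t)"
proof -
  from p a obtain u where p': "a' \<in> carrier R" "s' \<in> S" "u \<in> S"
    and e1: "u \<otimes> (s' \<otimes> a) = u \<otimes> (s \<otimes> a')"
    by (auto simp: mem_cls)
  from q a obtain v where q': "b' \<in> carrier R" "t' \<in> S" "v \<in> S"
    and e2: "v \<otimes> (t' \<otimes> b) = v \<otimes> (t \<otimes> b')"
    by (auto simp: mem_cls)
  have C: "u \<in> carrier R" "v \<in> carrier R" "t \<in> carrier R" "s \<in> carrier R"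
    "t' \<in> carrier R" "s' \<in> carrier R"
    using a p' q' by (auto simp: S_carrier)
  have "(u \<otimes> v) \<otimes> ((s' \<otimes> t') \<otimes> (a \<otimes> b)) = (u \<otimes> (s' \<otimes> a)) \<otimes> (v \<otimes> (t' \<otimes> b))"
    using C a p' q' by algebra
  also have "\<dots> = (u \<otimes> (s \<otimes> a')) \<otimes> (v \<otimes> (t \<otimes> b'))" using e1 e2 by simp
  also have "\<dots> = (u \<otimes> v) \<otimes> ((s \<otimes> t) \<otimes> (a' \<otimes> b'))" using C a p' q' by algebra
  finally show ?thesis
    using a p' q' C by (subst mem_cls) (auto intro!: bexI[of _ "u \<otimes> v"] S_mult)
qed

lemma add_compat:
  assumes a: "a \<in> carrier R" "s \<in> S" "b \<in> carrier R" "t \<in> S"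
    and p: "(a', s') \<in> cls a s" and q: "(b', t') \<in> cls b t"
  shows "(t' \<otimes> a' \<oplus> s' \<otimes> b', s' \<otimes> t') \<in> cls (t \<otimes> a \<oplus> s \<otimes> b) (s \<otimes> t)"
proof -
  from p a obtain u where p': "a' \<in> carrier R" "s' \<in> S" "u \<in> S"
    and e1: "u \<otimes> (s' \<otimes> a) = u \<otimes> (s \<otimes> a')"
    by (auto simp: mem_cls)
  from q a obtain v where q': "b' \<in> carrier R" "t' \<in> S" "v \<in> S"
    and e2: "v \<otimes> (t' \<otimes> b) = v \<otimes> (t \<otimes> b')"
    by (auto simp: mem_cls)
  have C: "u \<in> carrier R" "v \<in> carrier R" "t \<in> carrier R" "s \<in> carrier R"
    "t' \<in> carrier R" "s' \<in> carrier R"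
    using a p' q' by (auto simp: S_carrier)
  have "(u \<otimes> v) \<otimes> ((s' \<otimes> t') \<otimes> (t \<otimes> a \<oplus> s \<otimes> b))
      = (v \<otimes> t \<otimes> t') \<otimes> (u \<otimes> (s' \<otimes> a)) \<oplus> (u \<otimes> s \<otimes> s') \<otimes> (v \<otimes> (t' \<otimes> b))"
    using C a p' q' by algebra
  also have "\<dots> = (v \<otimes> t \<otimes> t') \<otimes> (u \<otimes> (s \<otimes> a')) \<oplus> (u \<otimes> s \<otimes> s') \<otimes> (v \<otimes> (t \<otimes> b'))"
    using e1 e2 by simp
  also have "\<dots> = (u \<otimes> v) \<otimes> ((s \<otimes> t) \<otimes> (t' \<otimes> a' \<oplus> s' \<otimes> b'))"
    using C a p' q' by algebra
  finally show ?thesis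
    using a p' q' C by (subst mem_cls) (auto intro!: bexI[of _ "u \<otimes> v"] S_mult)
qed

lemma carrier_localization: "carrier L = {cls a s | a s. a \<in> carrier R \<and> s \<in> S}"
  by (simp add: localization_def)

lemma carrier_localizationE:
  assumes "x \<in> carrier L"
  obtains a s where "x = cls a s" "a \<in> carrier R" "s \<in> S"
  using assms by (auto simp: carrier_localization)

lemma cls_in_carrier: "a \<in> carrier R \<Longrightarrow> s \<in> S \<Longrightarrow> cls a s \<in> carrier L"
  by (auto simp: carrier_localization)

lemma zero_localization: "\<zero>\<^bsub>L\<^esub> = cls \<zero> \<one>"
  by (simp add: localization_def)

lemma one_localization: "\<one>\<^bsub>L\<^esub> = cls \<one> \<one>"
  by (simp add: localization_def)

lemma mult_cls:
  assumes a: "a \<in> carrier R" "s \<in> S" "b \<in> carrier R" "t \<in> S"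
  shows "cls a s \<otimes>\<^bsub>L\<^esub> cls b t = cls (a \<otimes> b) (s \<otimes> t)"
proof -
  have ab: "a \<otimes> b \<in> carrier R" "s \<otimes> t \<in> S"
    using a by (auto intro: S_mult)
  have "{cls (a' \<otimes> b') (s' \<otimes> t') | a' s' b' t'. (a', s') \<in> cls a s \<and> (b', t') \<in> cls b t}
        = {cls (a \<otimes> b) (s \<otimes> t)}"
    using cls_eqI[OF ab mult_compat[OF a]] cls_refl a by blast
  then show ?thesis
    by (simp add: localization_def)
qed

lemma add_cls:
  assumes a: "a \<in> carrier R" "s \<in> S" "b \<in> carrier R" "t \<in> S"
  shows "cls a s \<oplus>\<^bsub>L\<^esub> cls b t = cls (t \<otimes> a \<oplus> s \<otimes> b) (s \<otimes> t)"
proof -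
  have ab: "t \<otimes> a \<oplus> s \<otimes> b \<in> carrier R" "s \<otimes> t \<in> S"
    using a S_carrier by (auto intro: S_mult)
  have "{cls (t' \<otimes> a' \<oplus> s' \<otimes> b') (s' \<otimes> t') | a' s' b' t'. (a', s') \<in> cls a s \<and> (b', t') \<in> cls b t}
        = {cls (t \<otimes> a \<oplus> s \<otimes> b) (s \<otimes> t)}"
    using cls_eqI[OF ab add_compat[OF a]] cls_refl a by blast
  then show ?thesis
    by (simp add: localization_def)
qed

lemma abelian_group_localization: "abelian_group L"
proof (rule abelian_groupI)
  fix x y assume "x \<in> carrier L" "y \<in> carrier L"
  then show "x \<oplus>\<^bsub>L\<^esub> y \<in> carrier L"
    by (elim carrier_localizationE) (simp add: add_cls S_carrier S_mult cls_in_carrier)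
next
  show "\<zero>\<^bsub>L\<^esub> \<in> carrier L"
    by (simp add: zero_localization cls_in_carrier one_in_S)
next
  fix x y z assume "x \<in> carrier L" "y \<in> carrier L" "z \<in> carrier L"
  then show "x \<oplus>\<^bsub>L\<^esub> y \<oplus>\<^bsub>L\<^esub> z = x \<oplus>\<^bsub>L\<^esub> (y \<oplus>\<^bsub>L\<^esub> z)"
  proof (elim carrier_localizationE)
    fix a s b t c r assume A: "x = cls a s" "a \<in> carrier R" "s \<in> S" "y = cls b t" "b \<in> carrier R"
      "t \<in> S" "z = cls c r" "c \<in> carrier R" "r \<in> S"
    have "s \<in> carrier R" "t \<in> carrier R" "r \<in> carrier R"
      using A S_carrier by auto
    with A show ?thesis
      by (simp add: add_cls S_mult) (rule cls_cong; algebra)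
  qed
next
  fix x y assume "x \<in> carrier L" "y \<in> carrier L"
  then show "x \<oplus>\<^bsub>L\<^esub> y = y \<oplus>\<^bsub>L\<^esub> x"
  proof (elim carrier_localizationE)
    fix a s b t assume A: "x = cls a s" "a \<in> carrier R" "s \<in> S" "y = cls b t" "b \<in> carrier R" "t \<in> S"
    have "s \<in> carrier R" "t \<in> carrier R"
      using A S_carrier by auto
    with A show ?thesis
      by (simp add: add_cls S_mult) (rule cls_cong; algebra)
  qed
next
  fix x assume "x \<in> carrier L"
  then show "\<zero>\<^bsub>L\<^esub> \<oplus>\<^bsub>L\<^esub> x = x"
    by (elim carrier_localizationE) (simp add: zero_localization add_cls one_in_S S_carrier)
next
  fix x assume "x \<in> carrier L"
  then obtain a s where x: "x = cls a s" "a \<in> carrier R" "s \<in> S"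
    by (rule carrier_localizationE)
  have "s \<in> carrier R"
    using x S_carrier by auto
  then have "cls (\<ominus> a) s \<oplus>\<^bsub>L\<^esub> x = cls \<zero> (s \<otimes> s)"
    using x by (simp add: add_cls) (rule cls_cong; algebra)
  also have "\<dots> = \<zero>\<^bsub>L\<^esub>"
    using x by (simp add: zero_localization cls_zero S_mult)
  finally show "\<exists>y\<in>carrier L. y \<oplus>\<^bsub>L\<^esub> x = \<zero>\<^bsub>L\<^esub>"
    using x cls_in_carrier by (intro bexI[of _ "cls (\<ominus> a) s"]) auto
qed

lemma comm_monoid_localization: "comm_monoid L"
proof (rule comm_monoidI)
  fix x y assume "x \<in> carrier L" "y \<in> carrier L"
  then show "x \<otimes>\<^bsub>L\<^esub> y \<in> carrier L"
    by (elim carrier_localizationE) (simp add: mult_cls S_mult cls_in_carrier)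
next
  show "\<one>\<^bsub>L\<^esub> \<in> carrier L"
    by (simp add: one_localization cls_in_carrier one_in_S)
next
  fix x y z assume "x \<in> carrier L" "y \<in> carrier L" "z \<in> carrier L"
  then show "x \<otimes>\<^bsub>L\<^esub> y \<otimes>\<^bsub>L\<^esub> z = x \<otimes>\<^bsub>L\<^esub> (y \<otimes>\<^bsub>L\<^esub> z)"
    by (elim carrier_localizationE) (simp add: mult_cls S_mult S_carrier m_assoc)
next
  fix x assume "x \<in> carrier L"
  then show "\<one>\<^bsub>L\<^esub> \<otimes>\<^bsub>L\<^esub> x = x"
    by (elim carrier_localizationE) (simp add: one_localization mult_cls one_in_S S_carrier)
next
  fix x y assume "x \<in> carrier L" "y \<in> carrier L"
  then show "x \<otimes>\<^bsub>L\<^esub> y = y \<otimes>\<^bsub>L\<^esub> x"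
    by (elim carrier_localizationE) (simp add: mult_cls S_carrier m_comm)
qed

lemma cring_localization: "cring L"
proof (rule cringI[OF abelian_group_localization comm_monoid_localization])
  fix x y z assume "x \<in> carrier L" "y \<in> carrier L" "z \<in> carrier L"
  then show "(x \<oplus>\<^bsub>L\<^esub> y) \<otimes>\<^bsub>L\<^esub> z = x \<otimes>\<^bsub>L\<^esub> z \<oplus>\<^bsub>L\<^esub> y \<otimes>\<^bsub>L\<^esub> z"
  proof (elim carrier_localizationE)
    fix a s b t c r assume A: "x = cls a s" "a \<in> carrier R" "s \<in> S" "y = cls b t" "b \<in> carrier R"
      "t \<in> S" "z = cls c r" "c \<in> carrier R" "r \<in> S"
    have C: "s \<in> carrier R" "t \<in> carrier R" "r \<in> carrier R"
      using A S_carrier by auto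
    have "x \<otimes>\<^bsub>L\<^esub> z \<oplus>\<^bsub>L\<^esub> y \<otimes>\<^bsub>L\<^esub> z
        = cls (r \<otimes> ((t \<otimes> a \<oplus> s \<otimes> b) \<otimes> c)) (r \<otimes> (s \<otimes> t \<otimes> r))"
      using A C by (simp add: add_cls mult_cls S_mult) (rule cls_cong; algebra)
    also have "\<dots> = (x \<oplus>\<^bsub>L\<^esub> y) \<otimes>\<^bsub>L\<^esub> z"
      using A C by (simp add: add_cls mult_cls S_mult cls_scale)
    finally show ?thesis
      by simp
  qed
qed

lemma cls_eq_zero_iff:
  assumes "a \<in> carrier R" "s \<in> S"
  shows "cls a s = \<zero>\<^bsub>L\<^esub> \<longleftrightarrow> (\<exists>u\<in>S. u \<otimes> a = \<zero>)"
proof -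
  have "cls a s = cls \<zero> \<one> \<longleftrightarrow> (\<exists>u\<in>S. u \<otimes> (s \<otimes> \<zero>) = u \<otimes> (\<one> \<otimes> a))"
    using assms one_in_S by (intro cls_eq_iff) auto
  also have "\<dots> \<longleftrightarrow> (\<exists>u\<in>S. u \<otimes> a = \<zero>)"
    using assms S_carrier by (auto simp: eq_commute)
  finally show ?thesis
    by (simp add: zero_localization)
qed

lemma pow_cls:
  assumes "a \<in> carrier R" "s \<in> S"
  shows "cls a s [^]\<^bsub>L\<^esub> (n::nat) = cls (a [^] n) (s [^] n)"
  by (induct n) (simp_all add: assms one_localization mult_cls S_pow S_carrier)

end

section \<open>Ideals in commutative and noetherian rings\<close>

lemma (in cring) ideal_criterion:
  assumes "I \<subseteq> carrier R" "\<zero> \<in> I" "\<And>a b. a \<in> I \<Longrightarrow> b \<in> I \<Longrightarrow> a \<oplus> b \<in> I"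
    "\<And>a. a \<in> I \<Longrightarrow> \<ominus> a \<in> I" "\<And>a x. a \<in> I \<Longrightarrow> x \<in> carrier R \<Longrightarrow> x \<otimes> a \<in> I"
  shows "ideal I R"
proof (rule idealI[OF ring_axioms])
  show "subgroup I (add_monoid R)"
    using assms by (intro add.subgroupI) auto
  show "\<And>a x. a \<in> I \<Longrightarrow> x \<in> carrier R \<Longrightarrow> x \<otimes> a \<in> I"
    by (rule assms(5))
  then show "\<And>a x. a \<in> I \<Longrightarrow> x \<in> carrier R \<Longrightarrow> a \<otimes> x \<in> I"
    using assms(1) m_comm by (metis subsetD)
qed

definition colon_elem :: "('a, 'b) ring_scheme \<Rightarrow> 'a set \<Rightarrow> 'a \<Rightarrow> 'a set" where
  "colon_elem R I z = {y \<in> carrier R. y \<otimes>\<^bsub>R\<^esub> z \<in> I}"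

lemma (in cring) ideal_colon_elem:
  assumes I: "ideal I R" and z: "z \<in> carrier R"
  shows "ideal (colon_elem R I z) R"
  unfolding colon_elem_def
proof (rule ideal_criterion)
  interpret I: ideal I R by (rule I)
  show "\<zero> \<in> {y \<in> carrier R. y \<otimes> z \<in> I}"
    using z by simp
  show "a \<oplus> b \<in> {y \<in> carrier R. y \<otimes> z \<in> I}"
    if "a \<in> {y \<in> carrier R. y \<otimes> z \<in> I}" "b \<in> {y \<in> carrier R. y \<otimes> z \<in> I}" for a b
    using that z by (simp add: l_distr)
  show "\<ominus> a \<in> {y \<in> carrier R. y \<otimes> z \<in> I}" if "a \<in> {y \<in> carrier R. y \<otimes> z \<in> I}" for a
    using that z by (simp add: l_minus)
  show "x \<otimes> a \<in> {y \<in> carrier R. y \<otimes> z \<in> I}"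
    if "a \<in> {y \<in> carrier R. y \<otimes> z \<in> I}" "x \<in> carrier R" for a x
    using that z by (simp add: m_assoc I.I_l_closed)
qed auto

lemma (in cring) colon_elem_subset_mult:
  assumes I: "ideal I R" and z: "z \<in> carrier R" and c: "c \<in> carrier R"
  shows "colon_elem R I z \<subseteq> colon_elem R I (c \<otimes> z)"
proof
  fix w assume "w \<in> colon_elem R I z"
  then have w: "w \<in> carrier R" "w \<otimes> z \<in> I"
    by (auto simp: colon_elem_def)
  have "w \<otimes> (c \<otimes> z) = c \<otimes> (w \<otimes> z)"
    using w(1) c z by (rule m_lcomm)
  also have "\<dots> \<in> I"
    using ideal.I_l_closed[OF I w(2) c] .
  finally show "w \<in> colon_elem R I (c \<otimes> z)"
    using w(1) by (simp add: colon_elem_def)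
qed

lemma (in cring) ideal_ann_elem:
  assumes "x \<in> carrier R"
  shows "ideal (ann_elem R x) R"
  using ideal_colon_elem[OF zeroideal assms] by (simp add: ann_elem_def colon_elem_def)

lemma (in primeideal) nat_pow_mem_imp_mem:
  assumes "y \<in> carrier R" "y [^] (n::nat) \<in> I"
  shows "y \<in> I"
  using assms(2)
proof (induct n)
  case 0
  then show ?case
    using one_imp_carrier I_notcarr by simp
next
  case (Suc n)
  then show ?case
    using I_prime[of "y [^] n" y] assms(1) by auto
qed

lemma (in primeideal) nilradical_subset: "nilradical R \<subseteq> I"
proof
  fix y assume "y \<in> nilradical R"
  then obtain n :: nat where "y \<in> carrier R" "y [^] n = \<zero>"
    unfolding nilradical_def by blast
  then show "y \<in> I"
    using nat_pow_mem_imp_mem[of y n] by simp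
qed

lemma (in cring) maximal_disjoint_ideal_meets:
  assumes Q: "ideal Q R"
    and max: "\<And>J. ideal J R \<Longrightarrow> J \<inter> M = {} \<Longrightarrow> Q \<subseteq> J \<Longrightarrow> J = Q"
    and c: "c \<in> carrier R" "c \<notin> Q"
  shows "\<exists>q\<in>Q. \<exists>r\<in>carrier R. q \<oplus> r \<otimes> c \<in> M"
proof -
  interpret Q: ideal Q R
    by (rule Q)
  let ?Qc = "Q <+>\<^bsub>R\<^esub> PIdl c"
  have mem_Qc: "q \<oplus> r \<otimes> c \<in> ?Qc" if "q \<in> Q" "r \<in> carrier R" for q r
    using that unfolding set_add_def' cgenideal_def by blast
  have "Q \<subseteq> ?Qc"
  proof
    fix q assume "q \<in> Q"
    then show "q \<in> ?Qc"
      using mem_Qc[of q \<zero>] c Q.Icarr[of q] by simp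
  qed
  moreover have "c \<in> ?Qc"
    using mem_Qc[of \<zero> \<one>] c by simp
  ultimately have "?Qc \<inter> M \<noteq> {}"
    using max[OF add_ideals[OF Q cgenideal_ideal[OF c(1)]]] c(2) by blast
  then show ?thesis
    unfolding set_add_def' cgenideal_def by blast
qed

lemma (in cring) primeideal_of_maximal_disjoint:
  assumes Q: "ideal Q R" and QM: "Q \<inter> M = {}"
    and M: "M \<subseteq> carrier R" "\<one> \<in> M" "\<And>x y. x \<in> M \<Longrightarrow> y \<in> M \<Longrightarrow> x \<otimes> y \<in> M"
    and max: "\<And>J. ideal J R \<Longrightarrow> J \<inter> M = {} \<Longrightarrow> Q \<subseteq> J \<Longrightarrow> J = Q"
  shows "primeideal Q R"
proof (rule primeidealI[OF Q is_cring])
  interpret Q: ideal Q R by (rule Q)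
  show "carrier R \<noteq> Q"
    using QM M(2) by blast
  fix a b assume ab: "a \<in> carrier R" "b \<in> carrier R" "a \<otimes> b \<in> Q"
  show "a \<in> Q \<or> b \<in> Q"
  proof (rule ccontr)
    assume "\<not> (a \<in> Q \<or> b \<in> Q)"
    then have "\<exists>q\<in>Q. \<exists>r\<in>carrier R. q \<oplus> r \<otimes> a \<in> M" "\<exists>q\<in>Q. \<exists>r\<in>carrier R. q \<oplus> r \<otimes> b \<in> M"
      using ab by (simp_all add: maximal_disjoint_ideal_meets[OF Q max])
    then obtain q1 r1 q2 r2 where A: "q1 \<in> Q" "r1 \<in> carrier R" "q1 \<oplus> r1 \<otimes> a \<in> M"
      "q2 \<in> Q" "r2 \<in> carrier R" "q2 \<oplus> r2 \<otimes> b \<in> M"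
      by blast
    have C: "q1 \<in> carrier R" "q2 \<in> carrier R"
      using A Q.Icarr by auto
    have "(q1 \<oplus> r1 \<otimes> a) \<otimes> (q2 \<oplus> r2 \<otimes> b)
        = q1 \<otimes> (q2 \<oplus> r2 \<otimes> b) \<oplus> (q2 \<otimes> (r1 \<otimes> a) \<oplus> (r1 \<otimes> r2) \<otimes> (a \<otimes> b))"
      using A C ab by algebra
    also have "\<dots> \<in> Q"
    proof (intro Q.a_closed)
      show "q1 \<otimes> (q2 \<oplus> r2 \<otimes> b) \<in> Q" "q2 \<otimes> (r1 \<otimes> a) \<in> Q"
        using A C ab by (simp_all add: Q.I_r_closed)
      show "(r1 \<otimes> r2) \<otimes> (a \<otimes> b) \<in> Q"
        using A ab by (simp add: Q.I_l_closed)
    qed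
    finally show False
      using M(3)[OF A(3,6)] QM by blast
  qed
qed

lemma (in noetherian_ring) exists_maximal_in_family:
  assumes "F \<noteq> {}" "\<And>I. I \<in> F \<Longrightarrow> ideal I R"
  shows "\<exists>J\<in>F. \<forall>Y\<in>F. J \<subseteq> Y \<longrightarrow> Y = J"
proof (rule subset_Zorn_nonempty[OF assms(1)])
  fix C assume C: "C \<noteq> {}" "subset.chain F C"
  then have "subset.chain {I. ideal I R} C"
    using assms(2) by (auto simp: pred_on.chain_def)
  then have "\<Union>C \<in> C"
    using ideal_chain_is_trivial C(1) by blast
  then show "\<Union>C \<in> F"
    using C(2) by (auto simp: pred_on.chain_def)
qed

locale noetherian_cring = cring R + noetherian_ring R for R (structure)

lemma (in noetherian_cring) exists_primeideal_disjoint: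
  assumes M: "M \<subseteq> carrier R" "\<one> \<in> M" "\<And>x y. x \<in> M \<Longrightarrow> y \<in> M \<Longrightarrow> x \<otimes> y \<in> M"
    and zero: "\<zero> \<notin> M"
  shows "\<exists>Q. primeideal Q R \<and> Q \<inter> M = {}"
proof -
  define F where "F = {Q. ideal Q R \<and> Q \<inter> M = {}}"
  have "{\<zero>} \<in> F"
    using zeroideal zero by (auto simp: F_def)
  then have "F \<noteq> {}" "\<And>I. I \<in> F \<Longrightarrow> ideal I R"
    by (auto simp: F_def)
  then obtain Q where "Q \<in> F" and Q_max: "\<forall>Y\<in>F. Q \<subseteq> Y \<longrightarrow> Y = Q"
    using exists_maximal_in_family by blast
  then have Q: "ideal Q R" "Q \<inter> M = {}"
    by (auto simp: F_def)
  have "primeideal Q R"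
  proof (rule primeideal_of_maximal_disjoint[OF Q M(1,2)])
    show "x \<otimes> y \<in> M" if "x \<in> M" "y \<in> M" for x y
      using that by (rule M(3))
    show "J = Q" if "ideal J R" "J \<inter> M = {}" "Q \<subseteq> J" for J
    proof -
      have "J \<in> F"
        using that(1,2) unfolding F_def by blast
      then show ?thesis
        using Q_max that(3) by blast
    qed
  qed
  with Q(2) show ?thesis
    by blast
qed

lemma (in noetherian_cring) exists_maximal_colon_elem:
  assumes I: "ideal I R" "\<one> \<notin> I"
  shows "\<exists>z\<in>carrier R - I. \<forall>z'\<in>carrier R - I.
           colon_elem R I z \<subseteq> colon_elem R I z' \<longrightarrow> colon_elem R I z' = colon_elem R I z"
proof -
  define F where "F = colon_elem R I ` (carrier R - I)"
  have "F \<noteq> {}"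
    using I(2) by (auto simp: F_def)
  moreover have "\<And>J. J \<in> F \<Longrightarrow> ideal J R"
    using ideal_colon_elem[OF I(1)] unfolding F_def by blast
  ultimately have "\<exists>J\<in>F. \<forall>Y\<in>F. J \<subseteq> Y \<longrightarrow> Y = J"
    by (rule exists_maximal_in_family)
  then obtain J where "J \<in> F" and J_max: "\<forall>Y\<in>F. J \<subseteq> Y \<longrightarrow> Y = J"
    by blast
  then obtain z where z: "z \<in> carrier R - I" and J: "J = colon_elem R I z"
    unfolding F_def by blast
  have "colon_elem R I z' = colon_elem R I z"
    if "z' \<in> carrier R - I" "colon_elem R I z \<subseteq> colon_elem R I z'" for z'
  proof -
    have "colon_elem R I z' \<in> F"
      unfolding F_def using that(1) by (rule imageI)
    then show ?thesis
      using J_max that(2) unfolding J by blast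
  qed
  with z show ?thesis
    by blast
qed

lemma (in cring) exists_last_nat_pow_mult_notin:
  assumes y: "y \<in> carrier R" and z: "z \<in> carrier R" "z \<notin> I" and n: "y [^] (n::nat) \<otimes> z \<in> I"
  shows "\<exists>i::nat. y [^] i \<otimes> z \<notin> I \<and> y \<otimes> (y [^] i \<otimes> z) \<in> I"
  using n
proof (induct n)
  case 0
  then show ?case
    using z by simp
next
  case (Suc n)
  show ?case
  proof (cases "y [^] n \<otimes> z \<in> I")
    case True
    then show ?thesis
      by (rule Suc.hyps)
  next
    case False
    have "y [^] Suc n \<otimes> z = y \<otimes> (y [^] n \<otimes> z)"
      by (simp only: nat_pow_Suc2[OF y] m_assoc[OF y nat_pow_closed[OF y] z(1)])
    then show ?thesis
      using False Suc.prems by auto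
  qed
qed

lemma (in cring) ann_elem_zero: "ann_elem R \<zero> = carrier R"
  by (auto simp: ann_elem_def)

lemma (in cring) associated_primes_eq_nilradical:
  assumes nil_prime: "primeideal (nilradical R) R"
    and z: "z \<in> carrier R" "ann_elem R z = nilradical R"
    and ann_subset: "\<And>x. x \<in> carrier R \<Longrightarrow> x \<noteq> \<zero> \<Longrightarrow> ann_elem R x \<subseteq> nilradical R"
  shows "associated_primes R = {nilradical R}"
proof -
  have "Q = nilradical R" if Q: "primeideal Q R" "x \<in> carrier R" "Q = ann_elem R x" for Q x
  proof
    interpret Q: primeideal Q R
      by (rule Q(1))
    show "nilradical R \<subseteq> Q"
      by (rule Q.nilradical_subset)
    have "x \<noteq> \<zero>"
      using Q(3) Q.I_notcarr ann_elem_zero by blast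
    then show "Q \<subseteq> nilradical R"
      using ann_subset[OF Q(2)] Q(3) by simp
  qed
  moreover have "nilradical R \<in> associated_primes R"
    unfolding associated_primes_def using nil_prime z(1) z(2)[symmetric] by blast
  ultimately show ?thesis
    unfolding associated_primes_def by blast
qed

section \<open>A minimal prime of a noetherian ring\<close>

locale noetherian_min_prime = noetherian_cring R for R (structure) +
  fixes P
  assumes minimal_prime: "minimal_prime P R"
begin

definition K :: "'a set" where
  "K = {x \<in> carrier R. \<exists>s\<in>carrier R - P. s \<otimes> x = \<zero>}"

lemma P_prime: "primeideal P R"
  using minimal_prime unfolding minimal_prime_def by blast

lemma P_minimal: "primeideal Q R \<Longrightarrow> Q \<subseteq> P \<Longrightarrow> Q = P"
  using minimal_prime unfolding minimal_prime_def by blast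

interpretation P: primeideal P R
  by (rule P_prime)

lemma P_subset: "P \<subseteq> carrier R"
  using P.Icarr by blast

lemma one_notin_P: "\<one> \<notin> P"
  using P.one_imp_carrier P.I_notcarr by blast

lemma mult_mem_P_iff: "a \<in> carrier R \<Longrightarrow> b \<in> carrier R \<Longrightarrow> a \<otimes> b \<in> P \<longleftrightarrow> a \<in> P \<or> b \<in> P"
  using P.I_prime P.I_l_closed P.I_r_closed by blast

lemma nat_pow_mem_P_imp_mem: "a \<in> carrier R \<Longrightarrow> a [^] (n::nat) \<in> P \<Longrightarrow> a \<in> P"
  by (rule P.nat_pow_mem_imp_mem)

lemma K_subset_carrier: "K \<subseteq> carrier R"
  by (auto simp: K_def)

lemma K_ideal: "ideal K R"
proof (rule ideal_criterion[OF K_subset_carrier])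
  show "\<zero> \<in> K"
    using one_notin_P by (auto simp: K_def)
next
  fix a b assume "a \<in> K" "b \<in> K"
  then obtain s t where A: "a \<in> carrier R" "b \<in> carrier R" "s \<in> carrier R" "s \<notin> P"
    "t \<in> carrier R" "t \<notin> P" "s \<otimes> a = \<zero>" "t \<otimes> b = \<zero>"
    by (auto simp: K_def)
  have "(s \<otimes> t) \<otimes> (a \<oplus> b) = t \<otimes> (s \<otimes> a) \<oplus> s \<otimes> (t \<otimes> b)"
    using A(1-3,5) by algebra
  then have "(s \<otimes> t) \<otimes> (a \<oplus> b) = \<zero>"
    using A by simp
  moreover have "s \<otimes> t \<in> carrier R - P"
    using A mult_mem_P_iff by auto
  ultimately show "a \<oplus> b \<in> K"
    using A unfolding K_def by blast
next
  fix a assume "a \<in> K"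
  then obtain s where "a \<in> carrier R" "s \<in> carrier R - P" "s \<otimes> a = \<zero>"
    by (auto simp: K_def)
  then show "\<ominus> a \<in> K"
    unfolding K_def by (auto simp: r_minus)
next
  fix a x assume "a \<in> K" and x: "x \<in> carrier R"
  then obtain s where s: "a \<in> carrier R" "s \<in> carrier R - P" "s \<otimes> a = \<zero>"
    by (auto simp: K_def)
  then have "s \<otimes> (x \<otimes> a) = \<zero>"
    using x by (simp add: m_lcomm[of s x a])
  with s x show "x \<otimes> a \<in> K"
    unfolding K_def by blast
qed

lemma one_notin_K: "\<one> \<notin> K"
  using P.zero_closed by (auto simp: K_def)

lemma K_subset_P: "K \<subseteq> P"
proof
  fix x assume "x \<in> K"
  then obtain s where "x \<in> carrier R" "s \<in> carrier R - P" "s \<otimes> x = \<zero>"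
    by (auto simp: K_def)
  then show "x \<in> P"
    using mult_mem_P_iff[of s x] P.zero_closed by auto
qed

lemma mult_mem_K_cancel:
  assumes "a \<in> carrier R - P" "x \<in> carrier R" "a \<otimes> x \<in> K"
  shows "x \<in> K"
proof -
  obtain s where s: "s \<in> carrier R - P" "s \<otimes> (a \<otimes> x) = \<zero>"
    using assms(3) by (auto simp: K_def)
  then have "(s \<otimes> a) \<otimes> x = \<zero>"
    using assms by (simp add: m_assoc)
  moreover have "s \<otimes> a \<in> carrier R - P"
    using assms s mult_mem_P_iff by auto
  ultimately show "x \<in> K"
    using assms unfolding K_def by blast
qed

lemma exists_common_annihilator:
  assumes "finite A" "A \<subseteq> K"
  shows "\<exists>b\<in>carrier R - P. \<forall>a\<in>A. b \<otimes> a = \<zero>"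
  using assms
proof (induct A rule: finite_induct)
  case empty
  then show ?case
    using one_notin_P by auto
next
  case (insert a A)
  then obtain b where b: "b \<in> carrier R - P" "\<forall>c\<in>A. b \<otimes> c = \<zero>"
    by auto
  obtain s where s: "a \<in> carrier R" "s \<in> carrier R - P" "s \<otimes> a = \<zero>"
    using insert.prems by (auto simp: K_def)
  have "(s \<otimes> b) \<otimes> c = \<zero>" if "c \<in> insert a A" for c
  proof (cases "c = a")
    case True
    then show ?thesis
      using b s by (simp add: m_lcomm m_assoc)
  next
    case False
    then have "c \<in> carrier R" "b \<otimes> c = \<zero>"
      using that insert.prems K_subset_carrier b by auto
    then show ?thesis
      using b s by (simp add: m_assoc)
  qed
  moreover have "s \<otimes> b \<in> carrier R - P"
    using b s mult_mem_P_iff by auto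
  ultimately show ?case
    by blast
qed

lemma exists_annihilator_of_K: "\<exists>b\<in>carrier R - P. \<forall>x\<in>K. b \<otimes> x = \<zero>"
proof -
  obtain A where A: "A \<subseteq> carrier R" "finite A" "K = Idl A"
    using finetely_gen[OF K_ideal] by blast
  then have "A \<subseteq> K"
    using genideal_self by auto
  then obtain b where b: "b \<in> carrier R - P" "\<forall>a\<in>A. b \<otimes> a = \<zero>"
    using exists_common_annihilator A(2) by blast
  have "A \<subseteq> ann_elem R b"
  proof
    fix a assume "a \<in> A"
    then show "a \<in> ann_elem R b"
      using b A(1) m_comm[of a b] by (auto simp: ann_elem_def)
  qed
  then have K_ann: "K \<subseteq> ann_elem R b"
    using A(3) genideal_minimal ideal_ann_elem b by auto
  have "b \<otimes> x = \<zero>" if "x \<in> K" for x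
    using K_ann that b K_subset_carrier m_comm[of x b] by (auto simp: ann_elem_def)
  with b show ?thesis
    by blast
qed

definition compl_P_powers :: "'a \<Rightarrow> 'a set" where
  "compl_P_powers x = {s \<otimes> x [^] (n::nat) | s n. s \<in> carrier R - P}"

lemma compl_P_subset_compl_P_powers:
  assumes "x \<in> carrier R"
  shows "carrier R - P \<subseteq> compl_P_powers x"
proof
  fix s assume s: "s \<in> carrier R - P"
  then have "s = s \<otimes> x [^] (0::nat)"
    by simp
  with s show "s \<in> compl_P_powers x"
    unfolding compl_P_powers_def by blast
qed

lemma compl_P_powers_mult:
  assumes x: "x \<in> carrier R" and m: "m1 \<in> compl_P_powers x" "m2 \<in> compl_P_powers x"
  shows "m1 \<otimes> m2 \<in> compl_P_powers x"
proof -
  obtain s1 n1 where A1: "m1 = s1 \<otimes> x [^] (n1::nat)" "s1 \<in> carrier R - P"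
    using m(1) unfolding compl_P_powers_def by blast
  obtain s2 n2 where A2: "m2 = s2 \<otimes> x [^] (n2::nat)" "s2 \<in> carrier R - P"
    using m(2) unfolding compl_P_powers_def by blast
  have "m1 \<otimes> m2 = (s1 \<otimes> s2) \<otimes> (x [^] n1 \<otimes> x [^] n2)"
    using A1 A2 x by (simp add: m_ac)
  then have "m1 \<otimes> m2 = (s1 \<otimes> s2) \<otimes> x [^] (n1 + n2)"
    using x by (simp add: nat_pow_mult)
  moreover have "s1 \<otimes> s2 \<in> carrier R - P"
    using A1 A2 mult_mem_P_iff by auto
  ultimately show ?thesis
    unfolding compl_P_powers_def by blast
qed

text \<open>Otherwise a prime ideal missing \<open>compl_P_powers x\<close> would lie strictly inside \<open>P\<close>.\<close>

lemma P_nat_pow_mem_K: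
  assumes x: "x \<in> P"
  shows "\<exists>n::nat. x [^] n \<in> K"
proof (rule ccontr)
  assume no_pow: "\<nexists>n::nat. x [^] n \<in> K"
  have xc: "x \<in> carrier R"
    using x P_subset by auto
  let ?M = "compl_P_powers x"
  have "?M \<subseteq> carrier R"
    using xc by (auto simp: compl_P_powers_def)
  moreover have "\<one> \<in> ?M"
    using compl_P_subset_compl_P_powers[OF xc] one_notin_P by blast
  moreover have "\<zero> \<notin> ?M"
  proof
    assume "\<zero> \<in> ?M"
    then obtain s n where "s \<in> carrier R - P" "\<zero> = s \<otimes> x [^] (n::nat)"
      unfolding compl_P_powers_def by blast
    then have "x [^] n \<in> K"
      using xc unfolding K_def by auto
    with no_pow show False
      by blast
  qed
  ultimately have "\<exists>Q. primeideal Q R \<and> Q \<inter> ?M = {}"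
    using compl_P_powers_mult[OF xc] by (intro exists_primeideal_disjoint) auto
  then obtain Q where Q: "primeideal Q R" "Q \<inter> ?M = {}"
    by blast
  have "Q \<subseteq> P"
  proof
    fix y assume "y \<in> Q"
    then have "y \<in> carrier R" "y \<notin> ?M"
      using Q(2) ideal.Icarr[OF primeideal.axioms(1)[OF Q(1)]] by auto
    then show "y \<in> P"
      using compl_P_subset_compl_P_powers[OF xc] by blast
  qed
  have "x = \<one> \<otimes> x [^] (1::nat)"
    using xc by simp
  then have x_in_M: "x \<in> ?M"
    using one_notin_P unfolding compl_P_powers_def by blast
  have "Q = P"
    using \<open>Q \<subseteq> P\<close> by (rule P_minimal[OF Q(1)])
  with x x_in_M Q(2) show False
    by blast
qed

text \<open>Take \<open>(K : z)\<close> maximal. It lies in \<open>P\<close> by cancellation; if \<open>y \<in> P\<close>, some \<open>y\<^sup>i z \<notin> K\<close> has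
  \<open>y\<^sup>i\<^sup>+\<^sup>1 z \<in> K\<close>, and maximality applied to \<open>(K : y\<^sup>i z) \<supseteq> (K : z)\<close> gives \<open>y \<in> (K : z)\<close>.\<close>

lemma exists_colon_K_eq_P: "\<exists>z\<in>carrier R - K. \<forall>y\<in>carrier R. y \<otimes> z \<in> K \<longleftrightarrow> y \<in> P"
proof -
  have "\<exists>z\<in>carrier R - K. \<forall>z'\<in>carrier R - K.
          colon_elem R K z \<subseteq> colon_elem R K z' \<longrightarrow> colon_elem R K z' = colon_elem R K z"
    by (rule exists_maximal_colon_elem[OF K_ideal one_notin_K])
  then obtain z where z_mem: "z \<in> carrier R - K" and z_max: "\<forall>z'\<in>carrier R - K.
      colon_elem R K z \<subseteq> colon_elem R K z' \<longrightarrow> colon_elem R K z' = colon_elem R K z" ..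
  from z_mem have z: "z \<in> carrier R" "z \<notin> K"
    by auto
  have "y \<otimes> z \<in> K \<longleftrightarrow> y \<in> P" if y: "y \<in> carrier R" for y
  proof
    assume "y \<otimes> z \<in> K"
    then show "y \<in> P"
      using mult_mem_K_cancel[of y z] z y by blast
  next
    assume "y \<in> P"
    then obtain n where "y [^] (n::nat) \<in> K"
      using P_nat_pow_mem_K by blast
    then have "y [^] n \<otimes> z \<in> K"
      using z(1) by (rule ideal.I_r_closed[OF K_ideal])
    then obtain i :: nat where i: "y [^] i \<otimes> z \<notin> K" "y \<otimes> (y [^] i \<otimes> z) \<in> K"
      using exists_last_nat_pow_mult_notin[OF y z] by blast
    have sub: "colon_elem R K z \<subseteq> colon_elem R K (y [^] i \<otimes> z)"
      using colon_elem_subset_mult[OF K_ideal z(1)] y by simp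
    have "y [^] i \<otimes> z \<in> carrier R - K"
      using i(1) y z by simp
    then have colon_eq: "colon_elem R K (y [^] i \<otimes> z) = colon_elem R K z"
      using sub by (rule z_max[rule_format])
    have "y \<in> colon_elem R K (y [^] i \<otimes> z)"
      using i(2) y by (simp add: colon_elem_def)
    then have "y \<in> colon_elem R K z"
      by (simp only: colon_eq)
    then show "y \<otimes> z \<in> K"
      by (simp add: colon_elem_def)
  qed
  with z show ?thesis
    by blast
qed

end

section \<open>The local blowing up along \<open>b\<close> alone\<close>

lemma vlt_zero_Some [simp]: "vlt (Some 0) (Some g) \<longleftrightarrow> 0 < (g::'g::linordered_ab_group_add)"
  by (auto simp: vlt_def)

lemma vlt_zero_None [simp]: "vlt (Some 0) (None :: 'g::linordered_ab_group_add option)"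
  by (simp add: vlt_def)

lemma vplus_Some_cancel: "vplus (Some g) x = vplus (Some g) y \<longleftrightarrow> x = y"
  by (cases x; cases y) auto

lemma vminus_eq_if_cross_eq:
  "vplus (Some t) x = vplus (Some s) y \<Longrightarrow> vminus x (Some s) = vminus y (Some t)"
  by (cases x; cases y) (auto simp: algebra_simps)

locale blowup_setup = noetherian_min_prime R "vsupp R \<nu>"
  for R (structure) and \<nu> :: "'a \<Rightarrow> 'g::linordered_ab_group_add option" +
  fixes b
  assumes valuation: "valuation R \<nu>"
    and b_notin_supp: "b \<in> carrier R - vsupp R \<nu>"
    and b_annihilates_K: "\<And>x. x \<in> K \<Longrightarrow> b \<otimes> x = \<zero>"
begin

lemma nu_mult: "a \<in> carrier R \<Longrightarrow> c \<in> carrier R \<Longrightarrow> \<nu> (a \<otimes> c) = vplus (\<nu> a) (\<nu> c)"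
  using valuation unfolding valuation_def by blast

lemma nu_one: "\<nu> \<one> = Some 0"
  using valuation unfolding valuation_def by blast

lemma nu_finite: "a \<in> carrier R \<Longrightarrow> a \<notin> vsupp R \<nu> \<Longrightarrow> \<exists>g. \<nu> a = Some g"
  by (auto simp: vsupp_def)

lemma powers_subset: "powers R b \<subseteq> carrier R - vsupp R \<nu>"
  using b_notin_supp nat_pow_mem_P_imp_mem by (auto simp: powers_def)

lemma b_in_powers: "b \<in> powers R b"
  unfolding powers_def using b_notin_supp by (auto intro: exI[of _ "1::nat"])

sublocale A: mult_closed_set R "powers R b"
proof
  show "powers R b \<subseteq> carrier R"
    using powers_subset by blast
  show "\<one> \<in> powers R b"
    unfolding powers_def by (auto intro: exI[of _ "0::nat"])
  fix s t assume "s \<in> powers R b" "t \<in> powers R b"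
  then obtain m n where "s = b [^] (m::nat)" "t = b [^] (n::nat)"
    unfolding powers_def by blast
  then have "s \<otimes> t = b [^] (m + n)"
    using b_notin_supp by (simp add: nat_pow_mult)
  then show "s \<otimes> t \<in> powers R b"
    unfolding powers_def by blast
qed

lemma powers_finite_val: "s \<in> powers R b \<Longrightarrow> \<exists>g. \<nu> s = Some g"
  using powers_subset nu_finite by blast

lemma Rb_eq: "Rb R b = A.L"
  by (simp add: Rb_def)

lemma Rb_cls_eq_zero_iff:
  assumes "a \<in> carrier R" "s \<in> powers R b"
  shows "A.cls a s = \<zero>\<^bsub>A.L\<^esub> \<longleftrightarrow> a \<in> K"
proof
  assume "A.cls a s = \<zero>\<^bsub>A.L\<^esub>"
  then obtain u where "u \<in> powers R b" "u \<otimes> a = \<zero>"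
    using A.cls_eq_zero_iff assms by blast
  then show "a \<in> K"
    using assms powers_subset unfolding K_def by blast
next
  assume "a \<in> K"
  then show "A.cls a s = \<zero>\<^bsub>A.L\<^esub>"
    using A.cls_eq_zero_iff assms b_in_powers b_annihilates_K by blast
qed

abbreviation "chart \<equiv> blowup_chart R b []"

lemma carrier_chart:
  "carrier chart = generate_ring A.L {A.cls r \<one> | r. r \<in> carrier R}"
  by (simp add: blowup_chart_def Rb_eq)

lemma chart_ops [simp]:
  "x \<otimes>\<^bsub>chart\<^esub> y = x \<otimes>\<^bsub>A.L\<^esub> y" "\<one>\<^bsub>chart\<^esub> = \<one>\<^bsub>A.L\<^esub>" "\<zero>\<^bsub>chart\<^esub> = \<zero>\<^bsub>A.L\<^esub>"
  by (simp_all add: blowup_chart_def Rb_eq)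

lemma chart_pow [simp]: "x [^]\<^bsub>chart\<^esub> (n::nat) = x [^]\<^bsub>A.L\<^esub> n"
  by (induct n) (simp_all add: nat_pow_def blowup_chart_def Rb_eq)

lemma chart_subset: "carrier chart \<subseteq> carrier A.L"
  unfolding carrier_chart
  using cring.axioms(1)[OF A.cring_localization] A.cls_in_carrier A.one_in_S
  by (intro ring.generate_ring_incl) auto

lemma cring_chart: "cring chart"
proof -
  interpret L: cring A.L
    by (rule A.cring_localization)
  have "subring (carrier chart) A.L"
    unfolding carrier_chart using A.cls_in_carrier A.one_in_S
    by (intro L.generate_ring_is_subring) auto
  then have "cring (A.L\<lparr>carrier := carrier chart\<rparr>)"
    using L.subcring_iff[OF chart_subset] L.subcringI' by blast
  then show ?thesis
    by (simp add: blowup_chart_def Rb_eq)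
qed

lemma cls_in_chart: "r \<in> carrier R \<Longrightarrow> A.cls r \<one> \<in> carrier chart"
  unfolding carrier_chart by (auto intro: generate_ring.incl)

lemma chart_mult_closed: "x \<in> carrier chart \<Longrightarrow> y \<in> carrier chart \<Longrightarrow> x \<otimes>\<^bsub>A.L\<^esub> y \<in> carrier chart"
  unfolding carrier_chart by (rule generate_ring.eng_mult)

lemma chart_elemE:
  assumes "x \<in> carrier chart"
  obtains a s where "x = A.cls a s" "a \<in> carrier R" "s \<in> powers R b"
proof -
  have "x \<in> carrier A.L"
    using assms chart_subset by blast
  then show thesis
    by (rule A.carrier_localizationE) (rule that)
qed

lemma nu_quotient_cls_eq:
  assumes a: "a \<in> carrier R" "s \<in> powers R b" and mem: "(a', s') \<in> A.cls a s"
  shows "vminus (\<nu> a') (\<nu> s') = vminus (\<nu> a) (\<nu> s)"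
proof -
  obtain u where u: "a' \<in> carrier R" "s' \<in> powers R b" "u \<in> powers R b"
    "u \<otimes> (s' \<otimes> a) = u \<otimes> (s \<otimes> a')"
    using mem[unfolded A.mem_cls[OF a]] by blast
  obtain g where g: "\<nu> u = Some g"
    using powers_finite_val u(3) by blast
  obtain \<sigma> where \<sigma>: "\<nu> s = Some \<sigma>"
    using powers_finite_val a(2) by blast
  obtain \<sigma>' where \<sigma>': "\<nu> s' = Some \<sigma>'"
    using powers_finite_val u(2) by blast
  have C: "u \<in> carrier R" "s \<in> carrier R" "s' \<in> carrier R"
    using u a A.S_carrier by auto
  have "\<nu> (u \<otimes> (s' \<otimes> a)) = \<nu> (u \<otimes> (s \<otimes> a'))"
    using u(4) by simp
  then have "vplus (Some g) (vplus (Some \<sigma>') (\<nu> a)) = vplus (Some g) (vplus (Some \<sigma>) (\<nu> a'))"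
    using C u(1) a(1) g \<sigma> \<sigma>' by (simp add: nu_mult)
  then have "vplus (Some \<sigma>') (\<nu> a) = vplus (Some \<sigma>) (\<nu> a')"
    by (simp only: vplus_Some_cancel)
  then show ?thesis
    using vminus_eq_if_cross_eq \<sigma> \<sigma>' by metis
qed

lemma loc_val_cls:
  assumes "a \<in> carrier R" "s \<in> powers R b"
  shows "loc_val \<nu> (A.cls a s) = vminus (\<nu> a) (\<nu> s)"
proof -
  have "(\<exists>(a', s')\<in>A.cls a s. v = vminus (\<nu> a') (\<nu> s')) \<longleftrightarrow> v = vminus (\<nu> a) (\<nu> s)" for v
  proof
    assume "\<exists>(a', s')\<in>A.cls a s. v = vminus (\<nu> a') (\<nu> s')"
    then obtain a' s' where "(a', s') \<in> A.cls a s" "v = vminus (\<nu> a') (\<nu> s')"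
      by blast
    then show "v = vminus (\<nu> a) (\<nu> s)"
      using nu_quotient_cls_eq[OF assms] by simp
  next
    assume "v = vminus (\<nu> a) (\<nu> s)"
    then show "\<exists>(a', s')\<in>A.cls a s. v = vminus (\<nu> a') (\<nu> s')"
      using A.cls_refl[OF assms] by blast
  qed
  then show ?thesis
    unfolding loc_val_def by simp
qed

abbreviation "T \<equiv> carrier chart - vcenter chart (loc_val \<nu>)"

lemma mem_T_iff: "x \<in> T \<longleftrightarrow> x \<in> carrier chart \<and> \<not> vlt (Some 0) (loc_val \<nu> x)"
  by (auto simp: vcenter_def)

text \<open>Elements outside the center have finite value, so their numerators lie outside the support.\<close>

lemma T_numerator_notin_supp:
  assumes "A.cls a s \<in> T" "a \<in> carrier R" "s \<in> powers R b"
  shows "a \<notin> vsupp R \<nu>"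
proof
  assume "a \<in> vsupp R \<nu>"
  then have "loc_val \<nu> (A.cls a s) = None"
    using assms loc_val_cls by (simp add: vsupp_def)
  then show False
    using assms(1) unfolding mem_T_iff by simp
qed

lemma T_mult_closed:
  assumes x: "x \<in> T" and y: "y \<in> T"
  shows "x \<otimes>\<^bsub>chart\<^esub> y \<in> T"
proof -
  obtain a s where as: "x = A.cls a s" "a \<in> carrier R" "s \<in> powers R b"
    using x chart_elemE by blast
  obtain c t where ct: "y = A.cls c t" "c \<in> carrier R" "t \<in> powers R b"
    using y chart_elemE by blast
  obtain \<alpha> where \<alpha>: "\<nu> a = Some \<alpha>"
    using nu_finite as(2) T_numerator_notin_supp[OF x[unfolded as(1)] as(2,3)] by blast
  obtain \<gamma> where \<gamma>: "\<nu> c = Some \<gamma>"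
    using nu_finite ct(2) T_numerator_notin_supp[OF y[unfolded ct(1)] ct(2,3)] by blast
  obtain \<sigma> where \<sigma>: "\<nu> s = Some \<sigma>"
    using powers_finite_val as(3) by blast
  obtain \<tau> where \<tau>: "\<nu> t = Some \<tau>"
    using powers_finite_val ct(3) by blast
  have "\<not> 0 < \<alpha> - \<sigma>"
    using x[unfolded as(1) mem_T_iff] loc_val_cls[OF as(2,3)] \<alpha> \<sigma> by simp
  moreover have "\<not> 0 < \<gamma> - \<tau>"
    using y[unfolded ct(1) mem_T_iff] loc_val_cls[OF ct(2,3)] \<gamma> \<tau> by simp
  moreover have "(\<alpha> + \<gamma>) - (\<sigma> + \<tau>) = (\<alpha> - \<sigma>) + (\<gamma> - \<tau>)"
    by (simp add: algebra_simps)
  ultimately have "\<not> 0 < (\<alpha> + \<gamma>) - (\<sigma> + \<tau>)"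
    by (metis add_nonpos_nonpos not_less)
  moreover have "x \<otimes>\<^bsub>A.L\<^esub> y = A.cls (a \<otimes> c) (s \<otimes> t)"
    using as ct by (simp add: A.mult_cls)
  moreover have "loc_val \<nu> (A.cls (a \<otimes> c) (s \<otimes> t)) = Some ((\<alpha> + \<gamma>) - (\<sigma> + \<tau>))"
    using as ct \<alpha> \<gamma> \<sigma> \<tau> A.S_mult A.S_carrier by (simp add: loc_val_cls nu_mult)
  moreover have "x \<otimes>\<^bsub>A.L\<^esub> y \<in> carrier chart"
    using x y chart_mult_closed by blast
  ultimately show ?thesis
    unfolding mem_T_iff by simp
qed

lemma one_in_T: "\<one>\<^bsub>chart\<^esub> \<in> T"
proof -
  have "loc_val \<nu> (A.cls \<one> \<one>) = Some 0"
    using A.one_in_S nu_one by (simp add: loc_val_cls)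
  moreover have "\<one>\<^bsub>chart\<^esub> = A.cls \<one> \<one>"
    by (simp add: A.one_localization)
  ultimately show ?thesis
    using cls_in_chart[of \<one>] unfolding mem_T_iff by simp
qed

sublocale B: mult_closed_set chart T
proof (intro mult_closed_set.intro mult_closed_set_axioms.intro)
  show "cring chart"
    by (rule cring_chart)
  show "T \<subseteq> carrier chart" "\<one>\<^bsub>chart\<^esub> \<in> T"
    by (blast, rule one_in_T)
  show "s \<otimes>\<^bsub>chart\<^esub> t \<in> T" if "s \<in> T" "t \<in> T" for s t
    using that by (rule T_mult_closed)
qed

lemma blowup_cls_eq_zero_iff:
  assumes a: "a \<in> carrier R" "s \<in> powers R b" "A.cls a s \<in> carrier chart" and w: "w \<in> T"
  shows "B.cls (A.cls a s) w = \<zero>\<^bsub>B.L\<^esub> \<longleftrightarrow> a \<in> K"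
proof -
  interpret L: cring A.L
    by (rule A.cring_localization)
  have "B.cls (A.cls a s) w = \<zero>\<^bsub>B.L\<^esub> \<longleftrightarrow> (\<exists>u\<in>T. u \<otimes>\<^bsub>chart\<^esub> A.cls a s = \<zero>\<^bsub>chart\<^esub>)"
    by (rule B.cls_eq_zero_iff[OF a(3) w])
  also have "\<dots> \<longleftrightarrow> a \<in> K"
  proof
    assume "\<exists>u\<in>T. u \<otimes>\<^bsub>chart\<^esub> A.cls a s = \<zero>\<^bsub>chart\<^esub>"
    then obtain u where u: "u \<in> T" "u \<otimes>\<^bsub>A.L\<^esub> A.cls a s = \<zero>\<^bsub>A.L\<^esub>"
      by auto
    obtain c t where ct: "u = A.cls c t" "c \<in> carrier R" "t \<in> powers R b"
      using u(1) chart_elemE by blast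
    have "c \<notin> vsupp R \<nu>"
      using T_numerator_notin_supp[OF u(1)[unfolded ct(1)] ct(2,3)] .
    have "A.cls (c \<otimes> a) (t \<otimes> s) = \<zero>\<^bsub>A.L\<^esub>"
      using u(2) ct a by (simp add: A.mult_cls)
    then have "c \<otimes> a \<in> K"
      using Rb_cls_eq_zero_iff ct a A.S_mult by simp
    then show "a \<in> K"
      using mult_mem_K_cancel ct(2) \<open>c \<notin> vsupp R \<nu>\<close> a(1) by blast
  next
    assume "a \<in> K"
    then have "A.cls a s = \<zero>\<^bsub>A.L\<^esub>"
      using Rb_cls_eq_zero_iff a by simp
    then have "\<one>\<^bsub>chart\<^esub> \<otimes>\<^bsub>chart\<^esub> A.cls a s = \<zero>\<^bsub>chart\<^esub>"
      by simp
    then show "\<exists>u\<in>T. u \<otimes>\<^bsub>chart\<^esub> A.cls a s = \<zero>\<^bsub>chart\<^esub>"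
      using one_in_T by blast
  qed
  finally show ?thesis .
qed

lemma blowup_cls_in_nilradical_iff:
  assumes a: "a \<in> carrier R" "s \<in> powers R b" "A.cls a s \<in> carrier chart" and w: "w \<in> T"
  shows "B.cls (A.cls a s) w \<in> nilradical B.L \<longleftrightarrow> a \<in> vsupp R \<nu>"
proof -
  have pow_eq_zero: "B.cls (A.cls a s) w [^]\<^bsub>B.L\<^esub> n = \<zero>\<^bsub>B.L\<^esub> \<longleftrightarrow> a [^] n \<in> K" for n :: nat
  proof -
    have pow: "B.cls (A.cls a s) w [^]\<^bsub>B.L\<^esub> n = B.cls (A.cls (a [^] n) (s [^] n)) (w [^]\<^bsub>chart\<^esub> n)"
      using B.pow_cls[OF a(3) w] A.pow_cls[OF a(1,2)] by simp
    have "A.cls a s [^]\<^bsub>chart\<^esub> n \<in> carrier chart"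
      using monoid.nat_pow_closed[OF cring.axioms(1)[OF cring_chart, THEN ring.is_monoid] a(3)] .
    then have "A.cls (a [^] n) (s [^] n) \<in> carrier chart"
      using A.pow_cls[OF a(1,2)] by simp
    then show ?thesis
      unfolding pow using blowup_cls_eq_zero_iff B.S_pow[OF w] A.S_pow a by simp
  qed
  have "(\<exists>n::nat. a [^] n \<in> K) \<longleftrightarrow> a \<in> vsupp R \<nu>"
    using P_nat_pow_mem_K K_subset_P nat_pow_mem_P_imp_mem a(1) by blast
  then show ?thesis
    using pow_eq_zero B.cls_in_carrier[OF a(3) w] unfolding nilradical_def by auto
qed

lemma blowup_elemE:
  assumes "y \<in> carrier B.L"
  obtains a s w where "y = B.cls (A.cls a s) w" "a \<in> carrier R" "s \<in> powers R b"
    "A.cls a s \<in> carrier chart" "w \<in> T"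
proof -
  obtain x w where xw: "y = B.cls x w" "x \<in> carrier chart" "w \<in> T"
    using assms by (rule B.carrier_localizationE)
  obtain a s where "x = A.cls a s" "a \<in> carrier R" "s \<in> powers R b"
    using xw(2) by (rule chart_elemE)
  then show thesis
    using that xw by blast
qed

lemma blowup_mult_eq_zero_iff:
  assumes a: "a \<in> carrier R" "s \<in> powers R b" "A.cls a s \<in> carrier chart" "w \<in> T"
    and c: "c \<in> carrier R" "t \<in> powers R b" "A.cls c t \<in> carrier chart" "v \<in> T"
  shows "B.cls (A.cls a s) w \<otimes>\<^bsub>B.L\<^esub> B.cls (A.cls c t) v = \<zero>\<^bsub>B.L\<^esub> \<longleftrightarrow> a \<otimes> c \<in> K"
    and "B.cls (A.cls a s) w \<otimes>\<^bsub>B.L\<^esub> B.cls (A.cls c t) v \<in> nilradical B.L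
          \<longleftrightarrow> a \<otimes> c \<in> vsupp R \<nu>"
proof -
  have prod: "A.cls a s \<otimes>\<^bsub>A.L\<^esub> A.cls c t = A.cls (a \<otimes> c) (s \<otimes> t)"
    using a c by (simp add: A.mult_cls)
  have "B.cls (A.cls a s) w \<otimes>\<^bsub>B.L\<^esub> B.cls (A.cls c t) v
      = B.cls (A.cls (a \<otimes> c) (s \<otimes> t)) (w \<otimes>\<^bsub>chart\<^esub> v)"
    using B.mult_cls[OF a(3,4) c(3,4)] prod by simp
  moreover have "A.cls (a \<otimes> c) (s \<otimes> t) \<in> carrier chart"
    using chart_mult_closed[OF a(3) c(3)] prod by simp
  moreover have "w \<otimes>\<^bsub>chart\<^esub> v \<in> T" "a \<otimes> c \<in> carrier R" "s \<otimes> t \<in> powers R b"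
    using a c B.S_mult A.S_mult by auto
  ultimately show "B.cls (A.cls a s) w \<otimes>\<^bsub>B.L\<^esub> B.cls (A.cls c t) v = \<zero>\<^bsub>B.L\<^esub> \<longleftrightarrow> a \<otimes> c \<in> K"
    and "B.cls (A.cls a s) w \<otimes>\<^bsub>B.L\<^esub> B.cls (A.cls c t) v \<in> nilradical B.L \<longleftrightarrow> a \<otimes> c \<in> vsupp R \<nu>"
    by (simp_all add: blowup_cls_eq_zero_iff blowup_cls_in_nilradical_iff)
qed

lemma one_blowup: "\<one>\<^bsub>B.L\<^esub> = B.cls (A.cls \<one> \<one>) (A.cls \<one> \<one>)"
  by (simp add: B.one_localization A.one_localization)

lemma cls_one_in_T: "A.cls \<one> \<one> \<in> T"
  using one_in_T by (simp add: A.one_localization)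

lemma ann_elem_blowup_eq_nilradical:
  obtains \<zeta> where "\<zeta> \<in> carrier B.L" "ann_elem B.L \<zeta> = nilradical B.L"
proof -
  obtain z where z: "z \<in> carrier R" "z \<notin> K"
    and colon: "\<forall>y\<in>carrier R. y \<otimes> z \<in> K \<longleftrightarrow> y \<in> vsupp R \<nu>"
    using exists_colon_K_eq_P by blast
  note z_facts = z(1) A.one_in_S cls_in_chart[OF z(1)] cls_one_in_T
  define \<zeta> where "\<zeta> = B.cls (A.cls z \<one>) (A.cls \<one> \<one>)"
  have "\<zeta> \<in> carrier B.L"
    unfolding \<zeta>_def using cls_in_chart[OF z(1)] cls_one_in_T by (rule B.cls_in_carrier)
  moreover have "y \<in> ann_elem B.L \<zeta> \<longleftrightarrow> y \<in> nilradical B.L" for y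
  proof (cases "y \<in> carrier B.L")
    case False
    then show ?thesis
      by (simp add: ann_elem_def nilradical_def)
  next
    case True
    then obtain a s w where y: "y = B.cls (A.cls a s) w" "a \<in> carrier R" "s \<in> powers R b"
      "A.cls a s \<in> carrier chart" "w \<in> T"
      by (rule blowup_elemE)
    have "y \<in> ann_elem B.L \<zeta> \<longleftrightarrow> a \<otimes> z \<in> K"
      using True blowup_mult_eq_zero_iff(1)[OF y(2-5) z_facts]
      unfolding ann_elem_def \<zeta>_def y(1) by simp
    also have "\<dots> \<longleftrightarrow> a \<in> vsupp R \<nu>"
      using colon y(2) by blast
    also have "\<dots> \<longleftrightarrow> y \<in> nilradical B.L"
      unfolding y(1) by (rule blowup_cls_in_nilradical_iff[OF y(2-5), symmetric])
    finally show ?thesis .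
  qed
  ultimately show thesis
    using that by blast
qed

lemma primeideal_nilradical_blowup: "primeideal (nilradical B.L) B.L"
proof (rule primeidealI)
  show "cring B.L"
    by (rule B.cring_localization)
  then show "ideal (nilradical B.L) B.L"
    using ann_elem_blowup_eq_nilradical cring.ideal_ann_elem by metis
  have "\<one>\<^bsub>B.L\<^esub> \<notin> nilradical B.L"
    using blowup_cls_in_nilradical_iff[OF _ A.one_in_S cls_in_chart cls_one_in_T] one_notin_P
    unfolding one_blowup by simp
  then show "carrier B.L \<noteq> nilradical B.L"
    using cring.cring_simprules(6)[OF \<open>cring B.L\<close>] by blast
next
  fix x y assume xy: "x \<in> carrier B.L" "y \<in> carrier B.L" "x \<otimes>\<^bsub>B.L\<^esub> y \<in> nilradical B.L"
  obtain a s w where x: "x = B.cls (A.cls a s) w" "a \<in> carrier R" "s \<in> powers R b"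
    "A.cls a s \<in> carrier chart" "w \<in> T"
    using xy(1) by (rule blowup_elemE)
  obtain c t v where y: "y = B.cls (A.cls c t) v" "c \<in> carrier R" "t \<in> powers R b"
    "A.cls c t \<in> carrier chart" "v \<in> T"
    using xy(2) by (rule blowup_elemE)
  have "a \<otimes> c \<in> vsupp R \<nu>"
    using xy(3) blowup_mult_eq_zero_iff(2)[OF x(2-5) y(2-5)] unfolding x(1) y(1) by simp
  then have "a \<in> vsupp R \<nu> \<or> c \<in> vsupp R \<nu>"
    using mult_mem_P_iff x(2) y(2) by blast
  then show "x \<in> nilradical B.L \<or> y \<in> nilradical B.L"
    unfolding x(1) y(1)
    using blowup_cls_in_nilradical_iff[OF x(2-5)] blowup_cls_in_nilradical_iff[OF y(2-5)] by blast
qed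

lemma ann_elem_blowup_subset_nilradical:
  assumes \<xi>: "\<xi> \<in> carrier B.L" "\<xi> \<noteq> \<zero>\<^bsub>B.L\<^esub>"
  shows "ann_elem B.L \<xi> \<subseteq> nilradical B.L"
proof
  obtain c t v where c: "\<xi> = B.cls (A.cls c t) v" "c \<in> carrier R" "t \<in> powers R b"
    "A.cls c t \<in> carrier chart" "v \<in> T"
    using \<xi>(1) by (rule blowup_elemE)
  have "c \<notin> K"
    using \<xi>(2) blowup_cls_eq_zero_iff[OF c(2-5)] unfolding c(1) by simp
  fix y assume "y \<in> ann_elem B.L \<xi>"
  then have y: "y \<in> carrier B.L" "y \<otimes>\<^bsub>B.L\<^esub> \<xi> = \<zero>\<^bsub>B.L\<^esub>"
    by (auto simp: ann_elem_def)
  obtain a s w where a: "y = B.cls (A.cls a s) w" "a \<in> carrier R" "s \<in> powers R b"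
    "A.cls a s \<in> carrier chart" "w \<in> T"
    using y(1) by (rule blowup_elemE)
  have "a \<otimes> c \<in> K"
    using y(2) blowup_mult_eq_zero_iff(1)[OF a(2-5) c(2-5)] unfolding a(1) c(1) by simp
  then have "a \<in> vsupp R \<nu>"
    using mult_mem_K_cancel[of a c] a(2) c(2) \<open>c \<notin> K\<close> by (auto simp: m_comm)
  then show "y \<in> nilradical B.L"
    unfolding a(1) using blowup_cls_in_nilradical_iff[OF a(2-5)] by simp
qed

lemma local_blowup_eq: "local_blowup R \<nu> b [] = B.L"
  by (simp add: local_blowup_def Let_def)

theorem associated_primes_blowup: "associated_primes B.L = {nilradical B.L}"
proof -
  obtain \<zeta> where "\<zeta> \<in> carrier B.L" "ann_elem B.L \<zeta> = nilradical B.L"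
    by (rule ann_elem_blowup_eq_nilradical)
  then show ?thesis
    using cring.associated_primes_eq_nilradical[OF B.cring_localization
        primeideal_nilradical_blowup _ _ ann_elem_blowup_subset_nilradical]
    by blast
qed

end

theorem mainTheorem7:
  fixes R :: "'a ring" and m :: "'a set" and \<nu> :: "'a \<Rightarrow> 'g::linordered_ab_group_add option"
  assumes "noetherian_ring R"
    and "local_ring R m"
    and "valuation R \<nu>"
    and "centered_on R m \<nu>"
  shows "\<exists>b as. blowup_data R \<nu> b as \<and>
           associated_primes (local_blowup R \<nu> b as) = {nilradical (local_blowup R \<nu> b as)}"
proof -
  interpret noetherian_min_prime R "vsupp R \<nu>"
  proof (intro noetherian_min_prime.intro noetherian_cring.intro noetherian_min_prime_axioms.intro)
    show "cring R" "minimal_prime (vsupp R \<nu>) R"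
      using assms(3) unfolding valuation_def by blast+
  qed fact
  obtain b where b: "b \<in> carrier R - vsupp R \<nu>" "\<forall>x\<in>K. b \<otimes>\<^bsub>R\<^esub> x = \<zero>\<^bsub>R\<^esub>"
    using exists_annihilator_of_K by blast
  interpret blowup_setup R \<nu> b
    by (intro blowup_setup.intro blowup_setup_axioms.intro noetherian_min_prime_axioms assms(3))
      (use b in auto)
  have "blowup_data R \<nu> b []"
    using b_notin_supp by (simp add: blowup_data_def)
  then show ?thesis
    using associated_primes_blowup local_blowup_eq by metis
qed

end
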